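(* Let $a_1,\dots,a_n\in\mathbb D$ and suppose $A:=\max_k|a_k|>0$. For $0<\lambda<1/A$ let \[ B_\lambda(z)=\prod_{k=1}^n\frac{z-\lambda a_k}{1-\lambda\overline{a_k}z}. \] Then $\lambda\mapsto M(B_\lambda)$ is strictly increasing and $\lambda\mapsto m(B_\lambda)$ is strictly decreasing on $(0,1/A)$.
   Context: $\mathbb D=\{|z|<1\}$. For a finite Blaschke product $B$, $M(B)=\sup_{|z|=1}|B'(z)|$ and $m(B)=\inf_{|z|=1}|B'(z)|$. *)

theory Defs
  imports "HOL-Analysis.Analysis"
begin

definition blaschke_scaled :: "(nat \<Rightarrow> complex) \<Rightarrow> nat \<Rightarrow> real \<Rightarrow> complex \<Rightarrow> complex" where
  "blaschke_scaled a n lam z =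
     (\<Prod>k<n. (z - of_real lam * a k) / (1 - of_real lam * cnj (a k) * z))"

definition Msup :: "(complex \<Rightarrow> complex) \<Rightarrow> real" where
  "Msup B = (SUP z\<in>sphere 0 1. norm (deriv B z))"

definition minf :: "(complex \<Rightarrow> complex) \<Rightarrow> real" where
  "minf B = (INF z\<in>sphere 0 1. norm (deriv B z))"

end

theory Submission
  imports Defs "HOL-Complex_Analysis.Complex_Analysis"
begin

text \<open>On the unit circle |B_\<lambda>'(z)| = \<Sum>_k P(\<lambda> a_k, z), with the Poisson kernel
  P(b, z) = (1 - |b|^2) / |z - b|^2. For a complex parameter w the sum \<Sum>_k P(w a_k, z) is the
  real part of the holomorphic function w \<mapsto> \<Sum>_k (z + w a_k) / (z - w a_k) on |w| < 1/A,
  which is not constant since it blows up as w a_k \<rightarrow> z for a zero a_k of maximal modulus.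
  Rotation invariance of the kernel shows that its values on the circle |w| = \<lambda> are exactly
  the values of |B_\<lambda>'| on the unit circle. By the open mapping theorem the real part has no
  interior extremum, so its value at w = \<lambda>1 is strictly exceeded and strictly undercut on
  every circle |w| = \<lambda>2 > \<lambda>1; hence M(B_\<lambda>) increases and m(B_\<lambda>) decreases strictly.\<close>

definition poisson_kernel :: "complex \<Rightarrow> complex \<Rightarrow> real" where
  "poisson_kernel b z = (1 - (norm b)\<^sup>2) / (norm (z - b))\<^sup>2"

lemma Re_cayley_eq_poisson_kernel:
  assumes "norm z = 1"
  shows "Re ((z + b) / (z - b)) = poisson_kernel b z"
proof -
  have "(Re z)\<^sup>2 + (Im z)\<^sup>2 = 1" using assms by (metis cmod_power2 power_one)
  then show ?thesis unfolding poisson_kernel_def Re_divide' cmod_power2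
    by (simp add: power2_eq_square algebra_simps)
qed

lemma poisson_kernel_nonneg: "norm b \<le> 1 \<Longrightarrow> poisson_kernel b z \<ge> 0"
  unfolding poisson_kernel_def by (simp add: power_le_one)

lemma poisson_kernel_mult_unimodular:
  assumes "norm u = 1"
  shows "poisson_kernel (u * b) (u * z) = poisson_kernel b z"
  unfolding poisson_kernel_def right_diff_distrib[symmetric] norm_mult assms by simp

lemma poisson_kernel_radial:
  assumes "norm z = 1" "0 \<le> t" "t < 1"
  shows "poisson_kernel (of_real t * z) z = (1 + t) / (1 - t)"
proof -
  have "z - of_real t * z = of_real (1 - t) * z" by (simp add: algebra_simps)
  then have "norm (z - of_real t * z) = 1 - t"
    using assms by (simp only: norm_mult norm_of_real) simp
  moreover have "norm (of_real t * z) = t" using assms by (simp add: norm_mult)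
  moreover have "(1 - t\<^sup>2) / (1 - t)\<^sup>2 = ((1 + t) * (1 - t)) / ((1 - t) * (1 - t))"
    by (simp add: power2_eq_square algebra_simps)
  ultimately show ?thesis using assms unfolding poisson_kernel_def by simp
qed

definition blaschke_factor :: "complex \<Rightarrow> complex \<Rightarrow> complex" where
  "blaschke_factor b z = (z - b) / (1 - cnj b * z)"

lemma blaschke_scaled_eq_prod:
  "blaschke_scaled a n lam = (\<lambda>z. \<Prod>k<n. blaschke_factor (of_real lam * a k) z)"
  unfolding blaschke_scaled_def blaschke_factor_def by (simp add: mult.assoc)

lemma blaschke_denominator_sphere:
  assumes "norm z = 1"
  shows "1 - cnj b * z = z * cnj (z - b)"
proof -
  have "z * cnj z = 1" using complex_norm_square[of z] assms by simp
  then show ?thesis by (simp add: algebra_simps)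
qed

lemma norm_blaschke_factor_sphere:
  assumes "norm z = 1" "norm b < 1"
  shows "norm (blaschke_factor b z) = 1"
proof -
  have "z - b \<noteq> 0" using assms by auto
  then show ?thesis
    unfolding blaschke_factor_def blaschke_denominator_sphere[OF assms(1)]
      norm_divide norm_mult complex_mod_cnj assms(1) by simp
qed

lemma blaschke_factor_has_field_derivative_sphere:
  assumes "norm z = 1" "norm b < 1"
  shows "(blaschke_factor b has_field_derivative
           of_real (poisson_kernel b z) / z * blaschke_factor b z) (at z)"
proof -
  have zb: "z - b \<noteq> 0" and z0: "z \<noteq> 0" using assms by auto
  note denom = blaschke_denominator_sphere[OF assms(1)]
  have "(blaschke_factor b has_field_derivative
          ((1 - 0) * (1 - cnj b * z) - (z - b) * (0 - cnj b * 1)) /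
          ((1 - cnj b * z) * (1 - cnj b * z))) (at z)"
    unfolding blaschke_factor_def
    by (intro DERIV_divide DERIV_diff DERIV_cmult DERIV_ident DERIV_const)
       (use zb z0 denom in simp)
  moreover have "(1 - 0) * (1 - cnj b * z) - (z - b) * (0 - cnj b * 1) = 1 - b * cnj b"
    by (simp add: algebra_simps)
  moreover have "of_real (poisson_kernel b z) = (1 - b * cnj b) / ((z - b) * cnj (z - b))"
    unfolding poisson_kernel_def of_real_divide of_real_diff complex_norm_square by simp
  moreover have "N / ((z * c) * (z * c)) = N / ((z - b) * c) / z * ((z - b) / (z * c))"
    if "c \<noteq> 0" for N c :: complex
    using zb z0 that by (simp add: field_simps)
  ultimately show ?thesis
    using zb unfolding blaschke_factor_def denom by simp
qed

definition poisson_sum :: "(nat \<Rightarrow> complex) \<Rightarrow> nat \<Rightarrow> complex \<Rightarrow> complex \<Rightarrow> real" where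
  "poisson_sum a n w z = (\<Sum>k<n. poisson_kernel (w * a k) z)"

lemma norm_deriv_blaschke_scaled:
  assumes "norm z = 1" "\<And>k. k < n \<Longrightarrow> norm (of_real lam * a k) < 1"
  shows "norm (deriv (blaschke_scaled a n lam) z) = poisson_sum a n (of_real lam) z"
proof -
  define b where "b k = of_real lam * a k" for k
  have factor_nonzero: "blaschke_factor (b k) z \<noteq> 0" if "k \<in> {..<n}" for k
    using norm_blaschke_factor_sphere[OF assms(1)] assms(2) that by (force simp: b_def)
  have "((\<lambda>z. \<Prod>k<n. blaschke_factor (b k) z) has_field_derivative
      (\<Prod>k<n. blaschke_factor (b k) z) *
      (\<Sum>k<n. of_real (poisson_kernel (b k) z) / z * blaschke_factor (b k) z /
                 blaschke_factor (b k) z)) (at z)"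
    using assms(2)
    by (intro has_field_derivative_prod' factor_nonzero
          blaschke_factor_has_field_derivative_sphere[OF assms(1)]) (auto simp: b_def)
  then have "deriv (blaschke_scaled a n lam) z =
      (\<Prod>k<n. blaschke_factor (b k) z) * (\<Sum>k<n. of_real (poisson_kernel (b k) z) / z)"
    unfolding blaschke_scaled_eq_prod b_def[symmetric]
    by (auto dest!: DERIV_imp_deriv intro!: sum.cong simp: factor_nonzero)
  moreover have "norm (\<Prod>k<n. blaschke_factor (b k) z) = 1"
    unfolding prod_norm[symmetric] b_def
    by (rule prod.neutral) (use norm_blaschke_factor_sphere[OF assms(1)] assms(2) in auto)
  moreover have "(\<Sum>k<n. poisson_kernel (b k) z) \<ge> 0"
    by (rule sum_nonneg, rule poisson_kernel_nonneg) (use assms(2) b_def in force)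
  ultimately show ?thesis
    using assms(1) unfolding poisson_sum_def b_def
    by (simp add: norm_mult norm_divide sum_divide_distrib[symmetric] flip: of_real_sum)
qed

lemma poisson_sum_rotate:
  assumes "w \<noteq> 0"
  shows "poisson_sum a n w z = poisson_sum a n (of_real (norm w)) (z / sgn w)"
proof -
  have u: "norm (sgn w) = 1" using assms by (simp add: norm_sgn)
  have "poisson_kernel (w * c) z = poisson_kernel (of_real (norm w) * c) (z / sgn w)" for c
  proof -
    have "w * c = sgn w * (of_real (norm w) * c)" and "z = sgn w * (z / sgn w)"
      using assms u by (auto simp: sgn_div_norm scaleR_conv_of_real field_simps)
    then show ?thesis using poisson_kernel_mult_unimodular[OF u] by metis
  qed
  then show ?thesis unfolding poisson_sum_def by simp
qed

lemma continuous_on_poisson_sum_sphere: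
  assumes "\<And>k. k < n \<Longrightarrow> norm (w * a k) < 1"
  shows "continuous_on (sphere 0 1) (poisson_sum a n w)"
proof -
  have "norm (z - w * a k) \<noteq> 0" if "z \<in> sphere 0 1" "k < n" for z k
    using assms[OF that(2)] that(1) by auto
  then show ?thesis unfolding poisson_sum_def poisson_kernel_def
    by (auto intro!: continuous_intros)
qed

definition herglotz_sum :: "(nat \<Rightarrow> complex) \<Rightarrow> nat \<Rightarrow> complex \<Rightarrow> complex \<Rightarrow> complex" where
  "herglotz_sum a n z w = (\<Sum>k<n. (z + w * a k) / (z - w * a k))"

lemma Re_herglotz_sum: "norm z = 1 \<Longrightarrow> Re (herglotz_sum a n z w) = poisson_sum a n w z"
  unfolding herglotz_sum_def poisson_sum_def Re_sum by (simp add: Re_cayley_eq_poisson_kernel)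

lemma herglotz_sum_holomorphic:
  assumes "norm z = 1" "\<And>k. k < n \<Longrightarrow> R * norm (a k) \<le> 1"
  shows "herglotz_sum a n z holomorphic_on ball 0 R"
proof -
  have "z - w * a k \<noteq> 0" if "w \<in> ball 0 R" "k < n" for w k
  proof -
    have "norm w * norm (a k) < 1"
    proof (cases "a k = 0")
      case False
      then have "norm w * norm (a k) < R * norm (a k)" using that(1) by simp
      then show ?thesis using assms(2)[OF that(2)] by linarith
    qed simp
    then show ?thesis using assms(1) by (auto simp: norm_mult)
  qed
  then show ?thesis unfolding herglotz_sum_def by (auto intro!: holomorphic_intros)
qed

lemma herglotz_sum_not_constant:
  assumes "norm z = 1" "k0 < n" "a k0 \<noteq> 0" "\<And>k. k < n \<Longrightarrow> norm (a k) \<le> norm (a k0)"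
  shows "\<not> herglotz_sum a n z constant_on ball 0 (1 / norm (a k0))"
proof
  assume "herglotz_sum a n z constant_on ball 0 (1 / norm (a k0))"
  then have const: "herglotz_sum a n z w = herglotz_sum a n z 0"
    if "w \<in> ball 0 (1 / norm (a k0))" for w
    using that assms(3) unfolding constant_on_def by force
  define t :: real where "t = real n / (real n + 1)"
  have t: "0 \<le> t" "t < 1" "(1 + t) / (1 - t) = 2 * real n + 1"
    unfolding t_def by (auto simp: field_simps)
  define w where "w = of_real t * z / a k0"
  have norm_w: "norm w = t / norm (a k0)"
    unfolding w_def using assms(1) t by (simp add: norm_divide norm_mult)
  have "2 * real n + 1 = poisson_kernel (w * a k0) z"
    unfolding w_def using assms(3) poisson_kernel_radial[OF assms(1) t(1,2)] t(3) by simp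
  also have "\<dots> \<le> poisson_sum a n w z"
    unfolding poisson_sum_def
  proof (rule member_le_sum)
    fix k assume "k \<in> {..<n} - {k0}"
    then have "norm (w * a k) \<le> norm w * norm (a k0)"
      using assms(4) by (simp add: norm_mult mult_left_mono)
    then have "norm (w * a k) \<le> t"
      using assms(3) norm_w by simp
    then show "0 \<le> poisson_kernel (w * a k) z" using t by (intro poisson_kernel_nonneg) auto
  qed (use assms(2) in auto)
  also have "\<dots> = real n"
  proof -
    have "herglotz_sum a n z w = herglotz_sum a n z 0"
      by (rule const) (use norm_w t assms(3) in \<open>simp add: divide_strict_right_mono\<close>)
    moreover have "herglotz_sum a n z 0 = of_nat n"
      using assms(1) by (auto simp: herglotz_sum_def)
    ultimately show ?thesis using Re_herglotz_sum[OF assms(1), of a n w] by simp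
  qed
  finally show False by simp
qed

lemma Re_holomorphic_no_local_max:
  assumes "f holomorphic_on S" "open S" "connected S" "\<not> f constant_on S"
    and "open U" "U \<subseteq> S" "w0 \<in> U" "\<And>w. w \<in> U \<Longrightarrow> Re (f w) \<le> Re (f w0)"
  shows False
proof -
  have "f w0 \<in> f ` U" using assms(7) by (rule imageI)
  then obtain e where e: "e > 0" "ball (f w0) e \<subseteq> f ` U"
    by (rule openE[OF open_mapping_thm[OF assms(1,2,3,5,6,4)]])
  have "dist (f w0) (f w0 + of_real (e/2)) = e/2" using e(1) by (simp add: dist_norm)
  then have "f w0 + of_real (e/2) \<in> f ` U" using e by (simp add: subset_iff)
  then obtain w where "w \<in> U" "f w = f w0 + of_real (e/2)" by (rule imageE) simp
  then show False using assms(8)[of w] e(1) by simp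
qed

lemma Re_holomorphic_exceeds_on_sphere:
  assumes "f holomorphic_on ball c R" "\<not> f constant_on ball c R" "r < R" "w0 \<in> ball c r"
  shows "\<exists>w\<in>sphere c r. Re (f w0) < Re (f w)"
proof -
  have no_max: False if "w1 \<in> ball c r" "\<And>w. w \<in> ball c r \<Longrightarrow> Re (f w) \<le> Re (f w1)" for w1
    using Re_holomorphic_no_local_max[OF assms(1) open_ball connected_ball assms(2) open_ball
        subset_ball[OF less_imp_le[OF assms(3)]] that] .
  have "continuous_on (ball c R) f"
    using assms(1) by (rule holomorphic_on_imp_continuous_on)
  then have "continuous_on (cball c r) f"
    by (rule continuous_on_subset) (simp add: cball_subset_ball_iff assms(3))
  then have "continuous_on (cball c r) (\<lambda>w. Re (f w))" by (rule continuous_on_Re)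
  moreover have w0: "w0 \<in> cball c r" using assms(4) by simp
  ultimately have "\<exists>ws\<in>cball c r. \<forall>w\<in>cball c r. Re (f w) \<le> Re (f ws)"
    using continuous_attains_sup[OF compact_cball] by blast
  then obtain ws where ws: "ws \<in> cball c r" "\<And>w. w \<in> cball c r \<Longrightarrow> Re (f w) \<le> Re (f ws)"
    by blast
  note ws_ball = ws(2)[OF ball_subset_cball[THEN subsetD]]
  have "ws \<notin> ball c r"
  proof
    assume "ws \<in> ball c r"
    then show False using ws_ball by (rule no_max)
  qed
  then have "ws \<in> sphere c r" using ws(1) by simp
  moreover have "Re (f w0) \<noteq> Re (f ws)"
  proof
    assume "Re (f w0) = Re (f ws)"
    with ws_ball have "\<And>w. w \<in> ball c r \<Longrightarrow> Re (f w) \<le> Re (f w0)" by simp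
    with assms(4) show False by (rule no_max)
  qed
  then have "Re (f w0) < Re (f ws)" using ws(2)[OF w0] by simp
  ultimately show ?thesis by blast
qed

lemma Re_holomorphic_below_on_sphere:
  assumes "f holomorphic_on ball c R" "\<not> f constant_on ball c R" "r < R" "w0 \<in> ball c r"
  shows "\<exists>w\<in>sphere c r. Re (f w) < Re (f w0)"
proof -
  have "(\<lambda>w. - f w) holomorphic_on ball c R" using assms(1) by (rule holomorphic_on_minus)
  moreover have "\<not> (\<lambda>w. - f w) constant_on ball c R"
    using assms(2) unfolding constant_on_def by (metis minus_equation_iff)
  ultimately show ?thesis
    using Re_holomorphic_exceeds_on_sphere[of "\<lambda>w. - f w", OF _ _ assms(3,4)] by auto
qed

lemma norm_scaled_le_max_less_one:
  fixes a :: "nat \<Rightarrow> complex"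
  assumes "\<And>k. k < n \<Longrightarrow> norm (a k) \<le> norm (a k0)" "a k0 \<noteq> 0"
    and "0 \<le> lam" "lam < 1 / norm (a k0)" "k < n"
  shows "norm (of_real lam * a k) < 1"
proof -
  have "norm (of_real lam * a k) = lam * norm (a k)" using assms(3) by (simp add: norm_mult)
  also have "\<dots> \<le> lam * norm (a k0)" using assms(1,3,5) by (simp add: mult_left_mono)
  also have "\<dots> < 1" using assms(2,4) by (simp add: field_simps)
  finally show ?thesis .
qed

lemma poisson_sum_at_larger_radius:
  assumes "norm z = 1" "k0 < n" "a k0 \<noteq> 0" "\<And>k. k < n \<Longrightarrow> norm (a k) \<le> norm (a k0)"
    and "0 < x" "x < y" "y < 1 / norm (a k0)"
  shows "\<exists>z'\<in>sphere 0 1. poisson_sum a n (of_real x) z < poisson_sum a n (of_real y) z'"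
    and "\<exists>z'\<in>sphere 0 1. poisson_sum a n (of_real y) z' < poisson_sum a n (of_real x) z"
proof -
  have holo: "herglotz_sum a n z holomorphic_on ball 0 (1 / norm (a k0))"
    using assms(3,4) by (intro herglotz_sum_holomorphic[OF assms(1)]) (simp add: field_simps)
  have nonconst: "\<not> herglotz_sum a n z constant_on ball 0 (1 / norm (a k0))"
    using assms(1-4) by (rule herglotz_sum_not_constant)
  have x: "(of_real x :: complex) \<in> ball 0 y" using assms(5,6) by simp
  have rotate: "z / sgn w \<in> sphere 0 1 \<and>
      Re (herglotz_sum a n z w) = poisson_sum a n (of_real y) (z / sgn w)"
    if "w \<in> sphere 0 y" for w
  proof -
    have "w \<noteq> 0" using that assms(5,6) by auto
    then show ?thesis
      using that assms(1) poisson_sum_rotate[of w a n z]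
      by (auto simp: Re_herglotz_sum norm_divide norm_sgn)
  qed
  have Re_x: "Re (herglotz_sum a n z (of_real x)) = poisson_sum a n (of_real x) z"
    using assms(1) by (rule Re_herglotz_sum)
  show "\<exists>z'\<in>sphere 0 1. poisson_sum a n (of_real x) z < poisson_sum a n (of_real y) z'"
    using Re_holomorphic_exceeds_on_sphere[OF holo nonconst assms(7) x] rotate Re_x by metis
  show "\<exists>z'\<in>sphere 0 1. poisson_sum a n (of_real y) z' < poisson_sum a n (of_real x) z"
    using Re_holomorphic_below_on_sphere[OF holo nonconst assms(7) x] rotate Re_x by metis
qed

lemma Msup_blaschke_scaled_attained:
  assumes "\<And>k. k < n \<Longrightarrow> norm (of_real lam * a k) < 1"
  shows "\<exists>z0\<in>sphere 0 1. Msup (blaschke_scaled a n lam) = poisson_sum a n (of_real lam) z0 \<and>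
           (\<forall>z\<in>sphere 0 1. poisson_sum a n (of_real lam) z \<le> poisson_sum a n (of_real lam) z0)"
proof -
  obtain z0 where z0: "z0 \<in> sphere 0 1"
    "\<And>z. z \<in> sphere 0 1 \<Longrightarrow> poisson_sum a n (of_real lam) z \<le> poisson_sum a n (of_real lam) z0"
    using continuous_attains_sup[OF compact_sphere _ continuous_on_poisson_sum_sphere[OF assms]]
    by fastforce
  have "Msup (blaschke_scaled a n lam) = (SUP z\<in>sphere 0 1. poisson_sum a n (of_real lam) z)"
    unfolding Msup_def by (rule SUP_cong) (use norm_deriv_blaschke_scaled assms in auto)
  also have "\<dots> = poisson_sum a n (of_real lam) z0" by (rule cSup_eq_maximum) (use z0 in auto)
  finally show ?thesis using z0 by blast
qed

lemma minf_blaschke_scaled_attained: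
  assumes "\<And>k. k < n \<Longrightarrow> norm (of_real lam * a k) < 1"
  shows "\<exists>z0\<in>sphere 0 1. minf (blaschke_scaled a n lam) = poisson_sum a n (of_real lam) z0 \<and>
           (\<forall>z\<in>sphere 0 1. poisson_sum a n (of_real lam) z0 \<le> poisson_sum a n (of_real lam) z)"
proof -
  obtain z0 where z0: "z0 \<in> sphere 0 1"
    "\<And>z. z \<in> sphere 0 1 \<Longrightarrow> poisson_sum a n (of_real lam) z0 \<le> poisson_sum a n (of_real lam) z"
    using continuous_attains_inf[OF compact_sphere _ continuous_on_poisson_sum_sphere[OF assms]]
    by fastforce
  have "minf (blaschke_scaled a n lam) = (INF z\<in>sphere 0 1. poisson_sum a n (of_real lam) z)"
    unfolding minf_def by (rule INF_cong) (use norm_deriv_blaschke_scaled assms in auto)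
  also have "\<dots> = poisson_sum a n (of_real lam) z0" by (rule cInf_eq_minimum) (use z0 in auto)
  finally show ?thesis using z0 by blast
qed

lemma Msup_blaschke_scaled_less:
  assumes "k0 < n" "a k0 \<noteq> 0" "\<And>k. k < n \<Longrightarrow> norm (a k) \<le> norm (a k0)"
    and "0 < x" "x < y" "y < 1 / norm (a k0)"
  shows "Msup (blaschke_scaled a n x) < Msup (blaschke_scaled a n y)"
proof -
  have small: "norm (of_real lam * a k) < 1" if "lam \<in> {x, y}" "k < n" for lam k
    using norm_scaled_le_max_less_one[of n a k0, OF assms(3,2)] that assms(4-6) by auto
  obtain z1 where
    z1: "z1 \<in> sphere 0 1" "Msup (blaschke_scaled a n x) = poisson_sum a n (of_real x) z1"
    using Msup_blaschke_scaled_attained[of n x a] small by blast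
  obtain z2 where z2: "Msup (blaschke_scaled a n y) = poisson_sum a n (of_real y) z2"
    "\<forall>z\<in>sphere 0 1. poisson_sum a n (of_real y) z \<le> poisson_sum a n (of_real y) z2"
    using Msup_blaschke_scaled_attained[of n y a] small by blast
  obtain z' where "z' \<in> sphere 0 1" "poisson_sum a n (of_real x) z1 < poisson_sum a n (of_real y) z'"
    using poisson_sum_at_larger_radius(1)[of z1 k0 n a x y, OF _ assms] z1(1) by auto
  then show ?thesis using z1(2) z2 by fastforce
qed

lemma minf_blaschke_scaled_less:
  assumes "k0 < n" "a k0 \<noteq> 0" "\<And>k. k < n \<Longrightarrow> norm (a k) \<le> norm (a k0)"
    and "0 < x" "x < y" "y < 1 / norm (a k0)"
  shows "minf (blaschke_scaled a n y) < minf (blaschke_scaled a n x)"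
proof -
  have small: "norm (of_real lam * a k) < 1" if "lam \<in> {x, y}" "k < n" for lam k
    using norm_scaled_le_max_less_one[of n a k0, OF assms(3,2)] that assms(4-6) by auto
  obtain z1 where
    z1: "z1 \<in> sphere 0 1" "minf (blaschke_scaled a n x) = poisson_sum a n (of_real x) z1"
    using minf_blaschke_scaled_attained[of n x a] small by blast
  obtain z2 where z2: "minf (blaschke_scaled a n y) = poisson_sum a n (of_real y) z2"
    "\<forall>z\<in>sphere 0 1. poisson_sum a n (of_real y) z2 \<le> poisson_sum a n (of_real y) z"
    using minf_blaschke_scaled_attained[of n y a] small by blast
  obtain z' where "z' \<in> sphere 0 1" "poisson_sum a n (of_real y) z' < poisson_sum a n (of_real x) z1"
    using poisson_sum_at_larger_radius(2)[of z1 k0 n a x y, OF _ assms] z1(1) by auto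
  then show ?thesis using z1(2) z2 by fastforce
qed

theorem lemma8:
  fixes a :: "nat \<Rightarrow> complex" and n :: nat
  assumes "\<forall>k<n. norm (a k) < 1"
    and "n \<ge> 1"
    and "Max ((\<lambda>k. norm (a k)) ` {..<n}) > 0"
  shows "strict_mono_on {0<..<1 / Max ((\<lambda>k. norm (a k)) ` {..<n})}
           (\<lambda>lam. Msup (blaschke_scaled a n lam)) \<and>
         strict_antimono_on {0<..<1 / Max ((\<lambda>k. norm (a k)) ` {..<n})}
           (\<lambda>lam. minf (blaschke_scaled a n lam))"
proof -
  have "Max ((\<lambda>k. norm (a k)) ` {..<n}) \<in> (\<lambda>k. norm (a k)) ` {..<n}"
    using assms(2) by (intro Max_in) (auto simp: lessThan_empty_iff)
  then obtain k0 where k0: "k0 < n" "norm (a k0) = Max ((\<lambda>k. norm (a k)) ` {..<n})"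
    by auto
  have "a k0 \<noteq> 0" using k0(2) assms(3) by auto
  moreover have "norm (a k) \<le> norm (a k0)" if "k < n" for k
    unfolding k0(2) using that by (intro Max_ge) auto
  ultimately show ?thesis
    unfolding k0(2)[symmetric]
    using Msup_blaschke_scaled_less[OF k0(1)] minf_blaschke_scaled_less[OF k0(1)]
    by (auto intro!: monotone_onI)
qed

end
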